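(* Let $b\in L^1_{loc}(\mathbf{R}^n\times\mathbf{R})$ be a vector field. There is a constant $C$ depending only on $n$ such that for all $x,y\in\mathbf{R}^n$ and $t>0$, \[ \int_0^t\!\!\int_{\mathbf{R}^n}\frac{1}{(|x-z|+\sqrt{t-\tau})^{n+1}}\cdot\frac{|b(z,\tau)|}{(|z-y|+\sqrt{\tau})^{n+1}}\,dz\,d\tau\le C\,B(b,0,t)\,K_1(x,t;y,0). \]
   Context: $K_1(x,t;y,s)=\dfrac{1}{(|x-y|+\sqrt{t-s})^{n+1}}$ for $t\ge s$ (with $(x,t)\neq(y,s)$), and $K_1(x,t;y,s)=0$ for $s>t$. For $l<t$, \[ B(b,l,t)=\sup_{x\in\mathbf{R}^n}\int_l^t\!\!\int_{\mathbf{R}^n}\big[K_1(x,t;y,s)+K_1(x,s;y,l)\big]\,|b(y,s)|\,dy\,ds . \] *)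

theory Defs
  imports "HOL-Analysis.Analysis"
begin

text \<open>At the diagonal (x,t) = (y,s) the formula has denominator 0, and Isabelle's
  division convention yields 0 there (a null set, irrelevant for all integrals).\<close>
definition K1 :: "'a::euclidean_space \<Rightarrow> real \<Rightarrow> 'a \<Rightarrow> real \<Rightarrow> real" where
  "K1 x t y s = (if s \<le> t then 1 / (norm (x - y) + sqrt (t - s)) ^ (DIM('a) + 1) else 0)"

definition locally_integrable :: "('a::euclidean_space \<times> real \<Rightarrow> 'b::euclidean_space) \<Rightarrow> bool" where
  "locally_integrable b \<longleftrightarrow> (\<forall>K. compact K \<longrightarrow> set_integrable lborel K b)"

definition Bnorm :: "('a::euclidean_space \<times> real \<Rightarrow> 'b::euclidean_space) \<Rightarrow> real \<Rightarrow> real \<Rightarrow> ennreal" where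
  "Bnorm b l t = (SUP x. \<integral>\<^sup>+ s \<in> {l..t}. (\<integral>\<^sup>+ y. ennreal ((K1 x t y s + K1 x s y l) * norm (b (y, s))) \<partial>lborel) \<partial>lborel)"

end

theory Submission
  imports Defs
begin

text \<open>For s \<le> \<tau> \<le> t the two space-time distances from (x,t) to (z,\<tau>) and from (z,\<tau>) to (y,s)
  add up to at least the distance D from (x,t) to (y,s), by the triangle inequality and
  subadditivity of the square root. Hence one of the two factors of K1(x,t;z,\<tau>) K1(z,\<tau>;y,s) is
  at most (2/D)^(n+1) = 2^(n+1) K1(x,t;y,s), and the other is bounded by the sum of both. Integrating
  against |b|, each summand is dominated by the integral defining B(b,l,t), centred at x resp. y.\<close>

lemma borel_measurable_locally_integrable:
  fixes b :: "'a::euclidean_space \<times> real \<Rightarrow> 'b::euclidean_space"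
  assumes "locally_integrable b"
  shows "b \<in> borel_measurable lborel"
proof (rule borel_measurable_LIMSEQ_metric)
  fix i :: nat
  have "set_integrable lborel (cball 0 (real i)) b"
    using assms unfolding locally_integrable_def by auto
  then show "(\<lambda>p. indicator (cball 0 (real i)) p *\<^sub>R b p) \<in> borel_measurable lborel"
    unfolding set_integrable_def by (rule borel_measurable_integrable)
next
  fix p :: "'a \<times> real"
  obtain N :: nat where N: "norm p \<le> real N" using real_arch_simple by blast
  have "\<forall>\<^sub>F i in sequentially. indicator (cball 0 (real i)) p *\<^sub>R b p = b p"
    using eventually_ge_at_top[of N]
    by eventually_elim (use N in \<open>auto simp: indicator_def\<close>)
  then show "(\<lambda>i. indicator (cball 0 (real i)) p *\<^sub>R b p) \<longlonglongrightarrow> b p"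
    by (rule tendsto_eventually)
qed

lemma borel_measurable_K1[measurable]:
  fixes f g :: "'m \<Rightarrow> 'a::euclidean_space"
  assumes [measurable]: "f \<in> borel_measurable M" "s \<in> borel_measurable M"
    "g \<in> borel_measurable M" "r \<in> borel_measurable M"
  shows "(\<lambda>p. K1 (f p) (s p) (g p) (r p)) \<in> borel_measurable M"
  unfolding K1_def by measurable

lemma K1_nonneg: "0 \<le> K1 x t y s"
  by (simp add: K1_def)

lemma K1_commute: "K1 x t y s = K1 y t x s"
  by (simp add: K1_def norm_minus_commute)

lemma inverse_power_mult_le:
  fixes A B D :: real
  assumes "0 \<le> A" "0 \<le> B" "0 < D" "D \<le> A + B"
  shows "1 / A ^ m * (1 / B ^ m) \<le> (2 / D) ^ m * (1 / A ^ m + 1 / B ^ m)"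
proof -
  have small_le: "1 / X ^ m \<le> (2 / D) ^ m" if "D / 2 \<le> X" for X :: real
  proof -
    have "D ^ m \<le> (2 * X) ^ m"
      using that assms(3) by (intro power_mono) auto
    then show ?thesis
      using that assms(3) by (simp add: power_divide divide_simps power_mult_distrib)
  qed
  show ?thesis
  proof (cases "D / 2 \<le> A")
    case True
    then show ?thesis
      using assms small_le[OF True] by (intro mult_mono) auto
  next
    case False
    then have "1 / A ^ m * (1 / B ^ m) \<le> (1 / A ^ m + 1 / B ^ m) * (2 / D) ^ m"
      using assms small_le[of B] by (intro mult_mono) auto
    then show ?thesis by (simp add: mult.commute)
  qed
qed

lemma K1_mult_le:
  fixes x y z :: "'a::euclidean_space"
  assumes "s \<le> \<tau>" "\<tau> \<le> t" "s < t"
  shows "K1 x t z \<tau> * K1 z \<tau> y s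
    \<le> 2 ^ (DIM('a) + 1) * K1 x t y s * (K1 x t z \<tau> + K1 z \<tau> y s)"
proof -
  let ?A = "norm (x - z) + sqrt (t - \<tau>)" and ?B = "norm (z - y) + sqrt (\<tau> - s)"
  let ?D = "norm (x - y) + sqrt (t - s)" and ?m = "DIM('a) + 1"
  have "norm (x - y) \<le> norm (x - z) + norm (z - y)"
    by (rule norm_diff_triangle_le) auto
  moreover have "sqrt (t - s) \<le> sqrt (t - \<tau>) + sqrt (\<tau> - s)"
    using sqrt_add_le_add_sqrt[of "t - \<tau>" "\<tau> - s"] assms by simp
  ultimately have "?D \<le> ?A + ?B" by linarith
  moreover have "0 < ?D" using assms by (simp add: add_nonneg_pos)
  ultimately have "1 / ?A ^ ?m * (1 / ?B ^ ?m) \<le> (2 / ?D) ^ ?m * (1 / ?A ^ ?m + 1 / ?B ^ ?m)"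
    using assms by (intro inverse_power_mult_le) auto
  then show ?thesis
    using assms by (simp add: K1_def power_divide)
qed

lemma K1_mult_le_Bnorm_kernels:
  fixes x y z :: "'a::euclidean_space"
  assumes "l \<le> \<tau>" "\<tau> \<le> t" "l < t" "0 \<le> c"
  shows "K1 x t z \<tau> * K1 z \<tau> y l * c
    \<le> 2 ^ (DIM('a) + 1) * K1 x t y l * ((K1 x t z \<tau> + K1 x \<tau> z l) * c)
      + 2 ^ (DIM('a) + 1) * K1 x t y l * ((K1 y t z \<tau> + K1 y \<tau> z l) * c)"
proof -
  let ?M = "2 ^ (DIM('a) + 1) * K1 x t y l"
  have "K1 x t z \<tau> * K1 z \<tau> y l \<le> ?M * (K1 x t z \<tau> + K1 y \<tau> z l)"
    using K1_mult_le[of l \<tau> t x z y] assms unfolding K1_commute[of z \<tau> y l] by simp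
  also have "\<dots> \<le> ?M * ((K1 x t z \<tau> + K1 x \<tau> z l) + (K1 y t z \<tau> + K1 y \<tau> z l))"
    using K1_nonneg[of x \<tau> z l] K1_nonneg[of y t z \<tau>] K1_nonneg[of x t y l]
    by (intro mult_left_mono) auto
  finally have "K1 x t z \<tau> * K1 z \<tau> y l * c
      \<le> ?M * ((K1 x t z \<tau> + K1 x \<tau> z l) + (K1 y t z \<tau> + K1 y \<tau> z l)) * c"
    using assms(4) by (rule mult_right_mono)
  then show ?thesis
    by (simp only: distrib_left distrib_right mult.assoc)
qed

lemma Bnorm_upper:
  "(\<integral>\<^sup>+ \<tau> \<in> {l..t}. (\<integral>\<^sup>+ z. ennreal ((K1 w t z \<tau> + K1 w \<tau> z l) * norm (b (z, \<tau>))) \<partial>lborel) \<partial>lborel)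
    \<le> Bnorm b l t"
  unfolding Bnorm_def by (rule SUP_upper) simp

lemma nn_integral_K1_mult_le_Bnorm:
  fixes b :: "'a::euclidean_space \<times> real \<Rightarrow> 'b::euclidean_space"
  assumes b[measurable]: "b \<in> borel_measurable lborel" and "l < t"
  shows "(\<integral>\<^sup>+ \<tau> \<in> {l..t}. (\<integral>\<^sup>+ z. ennreal (K1 x t z \<tau> * K1 z \<tau> y l * norm (b (z, \<tau>))) \<partial>lborel) \<partial>lborel)
    \<le> ennreal (2 ^ (DIM('a) + 2)) * Bnorm b l t * ennreal (K1 x t y l)"
proof -
  have [measurable]: "b \<in> borel_measurable (lborel \<Otimes>\<^sub>M lborel)"
    using b by (simp add: lborel_prod)
  define M where "M = 2 ^ (DIM('a) + 1) * K1 x t y l"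
  have "0 \<le> M" unfolding M_def by (simp add: K1_nonneg)
  define I where "I w \<tau> = (\<integral>\<^sup>+ z. ennreal ((K1 w t z \<tau> + K1 w \<tau> z l) * norm (b (z, \<tau>))) \<partial>lborel)"
    for w \<tau>
  have [measurable]: "I w \<in> borel_measurable lborel" for w
    unfolding I_def by measurable
  have "(\<integral>\<^sup>+ z. ennreal (K1 x t z \<tau> * K1 z \<tau> y l * norm (b (z, \<tau>))) \<partial>lborel)
      \<le> ennreal M * I x \<tau> + ennreal M * I y \<tau>" if "\<tau> \<in> {l..t}" for \<tau>
  proof -
    have "ennreal (K1 x t z \<tau> * K1 z \<tau> y l * norm (b (z, \<tau>)))
        \<le> ennreal M * ennreal ((K1 x t z \<tau> + K1 x \<tau> z l) * norm (b (z, \<tau>)))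
          + ennreal M * ennreal ((K1 y t z \<tau> + K1 y \<tau> z l) * norm (b (z, \<tau>)))" for z
    proof -
      have "K1 x t z \<tau> * K1 z \<tau> y l * norm (b (z, \<tau>))
          \<le> M * ((K1 x t z \<tau> + K1 x \<tau> z l) * norm (b (z, \<tau>)))
             + M * ((K1 y t z \<tau> + K1 y \<tau> z l) * norm (b (z, \<tau>)))"
        using K1_mult_le_Bnorm_kernels[of l \<tau> t "norm (b (z, \<tau>))" x z y] that \<open>l < t\<close>
        unfolding M_def by simp
      then have "ennreal (K1 x t z \<tau> * K1 z \<tau> y l * norm (b (z, \<tau>)))
          \<le> ennreal (M * ((K1 x t z \<tau> + K1 x \<tau> z l) * norm (b (z, \<tau>)))
                   + M * ((K1 y t z \<tau> + K1 y \<tau> z l) * norm (b (z, \<tau>))))"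
        by (rule ennreal_leI)
      then show ?thesis
        using \<open>0 \<le> M\<close> K1_nonneg[of x t z \<tau>] K1_nonneg[of x \<tau> z l] K1_nonneg[of y t z \<tau>] K1_nonneg[of y \<tau> z l]
        by (simp add: ennreal_mult ennreal_plus)
    qed
    then have "(\<integral>\<^sup>+ z. ennreal (K1 x t z \<tau> * K1 z \<tau> y l * norm (b (z, \<tau>))) \<partial>lborel)
        \<le> (\<integral>\<^sup>+ z. ennreal M * ennreal ((K1 x t z \<tau> + K1 x \<tau> z l) * norm (b (z, \<tau>)))
          + ennreal M * ennreal ((K1 y t z \<tau> + K1 y \<tau> z l) * norm (b (z, \<tau>))) \<partial>lborel)"
      by (rule nn_integral_mono)
    then show ?thesis
      unfolding I_def by (simp add: nn_integral_add nn_integral_cmult)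
  qed
  then have "(\<integral>\<^sup>+ \<tau> \<in> {l..t}. (\<integral>\<^sup>+ z. ennreal (K1 x t z \<tau> * K1 z \<tau> y l * norm (b (z, \<tau>))) \<partial>lborel) \<partial>lborel)
      \<le> (\<integral>\<^sup>+ \<tau> \<in> {l..t}. ennreal M * I x \<tau> + ennreal M * I y \<tau> \<partial>lborel)"
    by (intro nn_integral_mono) (simp split: split_indicator)
  also have "\<dots> = ennreal M * (\<integral>\<^sup>+ \<tau> \<in> {l..t}. I x \<tau> \<partial>lborel) + ennreal M * (\<integral>\<^sup>+ \<tau> \<in> {l..t}. I y \<tau> \<partial>lborel)"
    by (simp add: distrib_right nn_integral_add nn_integral_cmult mult.assoc)
  also have "\<dots> \<le> ennreal M * Bnorm b l t + ennreal M * Bnorm b l t"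
    unfolding I_def by (intro add_mono mult_left_mono Bnorm_upper) auto
  also have "\<dots> = ennreal (2 ^ (DIM('a) + 2)) * Bnorm b l t * ennreal (K1 x t y l)"
  proof -
    have "ennreal M = ennreal (2 ^ (DIM('a) + 1)) * ennreal (K1 x t y l)"
      unfolding M_def by (simp add: K1_nonneg ennreal_mult)
    moreover have "ennreal (2 ^ (DIM('a) + 2)) = 2 * ennreal (2 ^ (DIM('a) + 1))"
      using ennreal_mult[of 2 "2 ^ (DIM('a) + 1)"] by simp
    ultimately show ?thesis
      by (simp add: mult_2[symmetric] ac_simps)
  qed
  finally show ?thesis .
qed

theorem lemma3p1:
  shows "\<exists>C::real. \<forall>(b :: 'a::euclidean_space \<times> real \<Rightarrow> 'a). locally_integrable b \<longrightarrow>
     (\<forall>x y t. t > 0 \<longrightarrow>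
        (\<integral>\<^sup>+ \<tau> \<in> {0..t}. (\<integral>\<^sup>+ z. ennreal (1 / (norm (x - z) + sqrt (t - \<tau>)) ^ (DIM('a) + 1)
              * norm (b (z, \<tau>)) / (norm (z - y) + sqrt \<tau>) ^ (DIM('a) + 1)) \<partial>lborel) \<partial>lborel)
        \<le> ennreal C * Bnorm b 0 t * ennreal (K1 x t y 0))"
proof (intro exI[of _ "2 ^ (DIM('a) + 2)"] allI impI)
  fix b :: "'a \<times> real \<Rightarrow> 'a" and x y :: 'a and t :: real
  assume "locally_integrable b" and "0 < t"
  have "(\<integral>\<^sup>+ \<tau> \<in> {0..t}. (\<integral>\<^sup>+ z. ennreal (1 / (norm (x - z) + sqrt (t - \<tau>)) ^ (DIM('a) + 1)
              * norm (b (z, \<tau>)) / (norm (z - y) + sqrt \<tau>) ^ (DIM('a) + 1)) \<partial>lborel) \<partial>lborel)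
      = (\<integral>\<^sup>+ \<tau> \<in> {0..t}. (\<integral>\<^sup>+ z. ennreal (K1 x t z \<tau> * K1 z \<tau> y 0 * norm (b (z, \<tau>))) \<partial>lborel) \<partial>lborel)"
    by (intro set_nn_integral_cong refl) (auto simp: K1_def)
  also have "\<dots> \<le> ennreal (2 ^ (DIM('a) + 2)) * Bnorm b 0 t * ennreal (K1 x t y 0)"
    using borel_measurable_locally_integrable[OF \<open>locally_integrable b\<close>] \<open>0 < t\<close>
    by (rule nn_integral_K1_mult_le_Bnorm)
  finally show "(\<integral>\<^sup>+ \<tau> \<in> {0..t}. (\<integral>\<^sup>+ z. ennreal (1 / (norm (x - z) + sqrt (t - \<tau>)) ^ (DIM('a) + 1)
              * norm (b (z, \<tau>)) / (norm (z - y) + sqrt \<tau>) ^ (DIM('a) + 1)) \<partial>lborel) \<partial>lborel)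
      \<le> ennreal (2 ^ (DIM('a) + 2)) * Bnorm b 0 t * ennreal (K1 x t y 0)" .
qed

end
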